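(* Let $\beta>0$ and let $P,Q,F$ be probability measures on $\mathbb{R}$ with densities $p,q,f$ (or all discrete with probability mass functions on a countable set). Then: (1) $\mathrm{CM}_\beta(P,Q)\ge 0$, and $\mathrm{CM}_\beta(P,Q)=0$ if and only if $p=q$ almost everywhere; (2) $\mathrm{CM}_\beta(P,Q)=\mathrm{CM}_\beta(Q,P)$; (3) $\mathrm{CM}_\beta(P,Q)\le \mathrm{CM}_\beta(P,F)+\mathrm{CM}_\beta(F,Q)$; (4) $0\le \mathrm{CM}_\beta(P,Q)\le 1$; (5) $\lim_{\beta\to 0^+}\mathrm{CM}_\beta(P,Q)=\frac12\int_{\mathbb{R}}|p(x)-q(x)|\,dx=\mathrm{TV}(P,Q)$ (with the sum in the discrete case); (6) if $P_n,Q_n$ have densities (resp. mass functions) $p_n,q_n$ with $p_n\to p$ and $q_n\to q$ in total variation (i.e. $\int|p_n-p|\to0$ and $\int|q_n-q|\to0$, resp. sums), then $\mathrm{CM}_\beta(P_n,Q_n)\to \mathrm{CM}_\beta(P,Q)$.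
   Context: For probability measures $P,Q$ with densities $p,q$ and $\beta>0$, the complex metric is $\mathrm{CM}_\beta(P,Q)=\frac12\int_{\mathbb{R}}\left|p(x)e^{i\beta p(x)}-q(x)e^{i\beta q(x)}\right|dx$; in the discrete case with probability mass functions $p,q$ on a countable set it is $\frac12\sum_x\left|p(x)e^{i\beta p(x)}-q(x)e^{i\beta q(x)}\right|$. $\mathrm{TV}(P,Q)=\frac12\int|p-q|$ denotes the total variation distance. *)

theory Defs
  imports "HOL-Probability.Probability"
begin

definition is_density :: "(real \<Rightarrow> real) \<Rightarrow> bool" where
  "is_density p \<longleftrightarrow> p \<in> borel_measurable lborel \<and> (\<forall>x. 0 \<le> p x)
     \<and> integrable lborel p \<and> (\<integral>x. p x \<partial>lborel) = 1"

definition CM :: "real \<Rightarrow> (real \<Rightarrow> real) \<Rightarrow> (real \<Rightarrow> real) \<Rightarrow> real" where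
  "CM \<beta> p q = 1/2 * (\<integral>x. cmod (complex_of_real (p x) * exp (\<i> * complex_of_real (\<beta> * p x))
                        - complex_of_real (q x) * exp (\<i> * complex_of_real (\<beta> * q x))) \<partial>lborel)"

definition TV :: "(real \<Rightarrow> real) \<Rightarrow> (real \<Rightarrow> real) \<Rightarrow> real" where
  "TV p q = 1/2 * (\<integral>x. \<bar>p x - q x\<bar> \<partial>lborel)"

definition CMd :: "real \<Rightarrow> 'a pmf \<Rightarrow> 'a pmf \<Rightarrow> real" where
  "CMd \<beta> P Q = 1/2 * (\<Sum>\<^sub>\<infinity>x. cmod (complex_of_real (pmf P x) * exp (\<i> * complex_of_real (\<beta> * pmf P x))
                        - complex_of_real (pmf Q x) * exp (\<i> * complex_of_real (\<beta> * pmf Q x))))"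

definition TVd :: "'a pmf \<Rightarrow> 'a pmf \<Rightarrow> real" where
  "TVd P Q = 1/2 * (\<Sum>\<^sub>\<infinity>x. \<bar>pmf P x - pmf Q x\<bar>)"

end

(*
  Write h_b(t) = t e^{ibt}; the integrand of CM_b is |h_b(p x) - h_b(q x)|. Since |h_b(t)| = |t|,
  h_b is injective on [0, oo) and the integrand is a pseudometric in (p x, q x) bounded by
  p x + q x. This gives nonnegativity, the zero set, symmetry, the triangle inequality and
  CM_b <= (1 + 1) / 2.

  For the limits, |h_b(t) - h_c(t)| = |t| |e^{i(b-c)t} - 1| and
  |h_b(s) - h_b(t)| <= |s - t| + |t| |e^{ib(s-t)} - 1|. The error terms p x |e^{i g x} - 1| have
  vanishing integral whenever the integral of |g| vanishes: |e^{iy} - 1| <= min 2 |y|, and cutting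
  p at a level m bounds the integral by m * int |g| + 2 * int (p - m)^+. Hence b -> CM_b is
  continuous (its value at b = 0, where h_0 is the identity, is TV), and CM_b is continuous
  with respect to L^1 convergence of the densities.
*)

theory Submission
  imports Defs
begin

lemma integrable_mult_bounded:
  fixes p g :: "'a \<Rightarrow> real"
  assumes "integrable M p" "g \<in> borel_measurable M" "\<And>x. \<bar>g x\<bar> \<le> C"
  shows "integrable M (\<lambda>x. p x * g x)"
proof (rule Bochner_Integration.integrable_bound[where f="\<lambda>x. C * \<bar>p x\<bar>"])
  show "AE x in M. norm (p x * g x) \<le> norm (C * \<bar>p x\<bar>)"
  proof (rule AE_I2)
    fix x
    have "\<bar>p x\<bar> * \<bar>g x\<bar> \<le> \<bar>p x\<bar> * \<bar>C\<bar>"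
      using assms(3)[of x] by (intro mult_left_mono) auto
    then show "norm (p x * g x) \<le> norm (C * \<bar>p x\<bar>)"
      by (simp add: abs_mult mult.commute)
  qed
qed (use assms(1,2) in auto)

lemma tendsto_integral_by_error_bound:
  fixes u :: "'b \<Rightarrow> 'a \<Rightarrow> real"
  assumes "\<And>t. integrable M (u t)" "integrable M f" "\<And>t. integrable M (B t)"
    and "\<And>t x. \<bar>u t x - f x\<bar> \<le> B t x"
    and "((\<lambda>t. \<integral>x. B t x \<partial>M) \<longlongrightarrow> 0) F"
  shows "((\<lambda>t. \<integral>x. u t x \<partial>M) \<longlongrightarrow> (\<integral>x. f x \<partial>M)) F"
proof (rule LIM_zero_cancel, rule Lim_null_comparison[OF always_eventually assms(5)], rule allI)
  fix t
  have "norm ((\<integral>x. u t x \<partial>M) - (\<integral>x. f x \<partial>M)) = norm (\<integral>x. u t x - f x \<partial>M)"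
    using assms(1,2) by simp
  also have "\<dots> \<le> (\<integral>x. norm (u t x - f x) \<partial>M)"
    by (rule integral_norm_bound)
  also have "\<dots> \<le> (\<integral>x. B t x \<partial>M)"
    using assms(1-4) by (intro Bochner_Integration.integral_mono) auto
  finally show "norm ((\<integral>x. u t x \<partial>M) - (\<integral>x. f x \<partial>M)) \<le> (\<integral>x. B t x \<partial>M)" .
qed

lemma tendsto_integral_max_diff_0:
  fixes p :: "'a \<Rightarrow> real"
  assumes "integrable M p"
  shows "(\<lambda>m. \<integral>x. max (p x - real m) 0 \<partial>M) \<longlonglongrightarrow> 0"
proof -
  have "(\<lambda>m. \<integral>x. max (p x - real m) 0 \<partial>M) \<longlonglongrightarrow> (\<integral>x. 0 \<partial>M)"
  proof (rule integral_dominated_convergence[where w="\<lambda>x. \<bar>p x\<bar>"])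
    show "AE x in M. (\<lambda>m. max (p x - real m) 0) \<longlonglongrightarrow> 0"
    proof (rule AE_I2, rule tendsto_eventually)
      fix x
      show "\<forall>\<^sub>F m in sequentially. max (p x - real m) 0 = 0"
        using eventually_ge_at_top[of "nat \<lceil>p x\<rceil>"] by eventually_elim linarith
    qed
  qed (use assms in auto)
  then show ?thesis by simp
qed

lemma mult_le_truncation:
  fixes a y m C :: real
  assumes "0 \<le> y" "y \<le> C"
  shows "a * y \<le> m * y + C * max (a - m) 0"
proof (cases "a \<le> m")
  case True
  then show ?thesis using mult_right_mono[OF True assms(1)] by simp
next
  case False
  then have "(a - m) * y \<le> (a - m) * C"
    using assms(2) by (intro mult_left_mono) auto
  then show ?thesis using False by (simp add: algebra_simps)
qed

lemma tendsto_integral_mult_bounded_0: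
  fixes p :: "'a \<Rightarrow> real"
  assumes p: "integrable M p" "\<And>x. 0 \<le> p x"
    and \<phi>: "\<And>t. integrable M (\<phi> t)" "\<And>t x. 0 \<le> \<phi> t x" "\<And>t x. \<phi> t x \<le> C"
    and lim: "((\<lambda>t. \<integral>x. \<phi> t x \<partial>M) \<longlongrightarrow> 0) F"
  shows "((\<lambda>t. \<integral>x. p x * \<phi> t x \<partial>M) \<longlongrightarrow> 0) F"
proof (rule tendstoI)
  fix e :: real assume "0 < e"
  have [measurable]: "p \<in> borel_measurable M"
    using p(1) by simp
  have int_tail: "integrable M (\<lambda>x. max (p x - real m) 0)" for m
    by (rule Bochner_Integration.integrable_bound[OF p(1)]) (use p(2) in auto)
  have int_p\<phi>: "integrable M (\<lambda>x. p x * \<phi> t x)" for t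
    using \<phi> by (intro integrable_mult_bounded[OF p(1), where C=C]) auto
  have "(\<lambda>m. C * (\<integral>x. max (p x - real m) 0 \<partial>M)) \<longlonglongrightarrow> 0"
    by (rule tendsto_mult_right_zero[OF tendsto_integral_max_diff_0[OF p(1)]])
  from order_tendstoD(2)[OF this, of "e / 2"]
  obtain m where m: "C * (\<integral>x. max (p x - real m) 0 \<partial>M) < e / 2"
    using \<open>0 < e\<close> by (auto simp: eventually_sequentially)
  have "\<forall>\<^sub>F t in F. real m * (\<integral>x. \<phi> t x \<partial>M) < e / 2"
    using tendsto_mult_right_zero[OF lim, of "real m"] \<open>0 < e\<close> by (intro order_tendstoD(2)) auto
  then show "\<forall>\<^sub>F t in F. dist (\<integral>x. p x * \<phi> t x \<partial>M) 0 < e"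
  proof eventually_elim
    case (elim t)
    have "0 \<le> (\<integral>x. p x * \<phi> t x \<partial>M)"
      using p(2) \<phi>(2) by (intro Bochner_Integration.integral_nonneg) simp
    moreover have "(\<integral>x. p x * \<phi> t x \<partial>M)
        \<le> real m * (\<integral>x. \<phi> t x \<partial>M) + C * (\<integral>x. max (p x - real m) 0 \<partial>M)"
      using Bochner_Integration.integral_mono[OF int_p\<phi> _ mult_le_truncation[OF \<phi>(2,3), where m="real m"]]
        int_tail \<phi>(1)
      by simp
    ultimately show ?case using elim m by simp
  qed
qed

definition chord :: "real \<Rightarrow> real" where
  "chord y = cmod (exp (\<i> * complex_of_real y) - 1)"

lemma chord_nonneg: "0 \<le> chord y"
  by (simp add: chord_def)

lemma chord_le_abs: "chord y \<le> \<bar>y\<bar>"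
  using iexp_approx1[of y 0] by (simp add: chord_def)

lemma chord_le_2: "chord y \<le> 2"
  using norm_triangle_ineq4[of "exp (\<i> * complex_of_real y)" 1] by (simp add: chord_def)

lemma borel_measurable_chord [measurable]:
  "g \<in> borel_measurable M \<Longrightarrow> (\<lambda>x. chord (g x)) \<in> borel_measurable M"
  by (rule borel_measurable_continuous_on) (auto simp: chord_def[abs_def] intro!: continuous_intros)

lemma tendsto_integral_mult_chord_0:
  fixes p :: "'a \<Rightarrow> real" and g :: "'b \<Rightarrow> 'a \<Rightarrow> real"
  assumes p: "integrable M p" "\<And>x. 0 \<le> p x"
    and g: "\<And>t. integrable M (g t)" "((\<lambda>t. \<integral>x. \<bar>g t x\<bar> \<partial>M) \<longlongrightarrow> 0) F"
  shows "((\<lambda>t. \<integral>x. p x * chord (g t x) \<partial>M) \<longlongrightarrow> 0) F"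
proof (rule tendsto_integral_mult_bounded_0[OF p, where C=2])
  show int: "integrable M (\<lambda>x. chord (g t x))" for t
  proof (rule Bochner_Integration.integrable_bound[OF integrable_abs[OF g(1)]])
    show "AE x in M. norm (chord (g t x)) \<le> norm \<bar>g t x\<bar>"
      by (simp add: chord_le_abs chord_nonneg)
  qed (use g(1) in simp)
  show "((\<lambda>t. \<integral>x. chord (g t x) \<partial>M) \<longlongrightarrow> 0) F"
  proof (rule tendsto_sandwich[OF _ _ tendsto_const g(2)])
    show "\<forall>\<^sub>F t in F. 0 \<le> (\<integral>x. chord (g t x) \<partial>M)"
      by (simp add: Bochner_Integration.integral_nonneg chord_nonneg)
    show "\<forall>\<^sub>F t in F. (\<integral>x. chord (g t x) \<partial>M) \<le> (\<integral>x. \<bar>g t x\<bar> \<partial>M)"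
      using int g(1) chord_le_abs by (intro always_eventually allI Bochner_Integration.integral_mono) auto
  qed
qed (auto simp: chord_nonneg chord_le_2)

definition phase_lift :: "real \<Rightarrow> real \<Rightarrow> complex" where
  "phase_lift b t = complex_of_real t * exp (\<i> * complex_of_real (b * t))"

lemma norm_phase_lift [simp]: "cmod (phase_lift b t) = \<bar>t\<bar>"
  by (simp add: phase_lift_def norm_mult)

lemma borel_measurable_phase_lift:
  "f \<in> borel_measurable M \<Longrightarrow> (\<lambda>x. phase_lift b (f x)) \<in> borel_measurable M"
proof -
  have "continuous_on UNIV (phase_lift b)"
    unfolding phase_lift_def by (intro continuous_intros)
  then show "f \<in> borel_measurable M \<Longrightarrow> (\<lambda>x. phase_lift b (f x)) \<in> borel_measurable M"
    using borel_measurable_continuous_on by blast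
qed

lemma norm_phase_lift_diff_param:
  "cmod (phase_lift b t - phase_lift c t) = \<bar>t\<bar> * chord ((b - c) * t)"
proof -
  have "phase_lift b t - phase_lift c t
      = phase_lift c t * (exp (\<i> * complex_of_real ((b - c) * t)) - 1)"
    by (simp add: phase_lift_def algebra_simps flip: exp_add)
  then show ?thesis by (simp add: norm_mult chord_def)
qed

lemma norm_phase_lift_diff_le:
  "cmod (phase_lift b s - phase_lift b t) \<le> \<bar>s - t\<bar> + \<bar>t\<bar> * chord (b * (s - t))"
proof -
  have "phase_lift b s - phase_lift b t
      = complex_of_real (s - t) * exp (\<i> * complex_of_real (b * s))
        + phase_lift b t * (exp (\<i> * complex_of_real (b * (s - t))) - 1)"
    by (simp add: phase_lift_def algebra_simps flip: exp_add)
  also have "cmod \<dots> \<le> \<bar>s - t\<bar> + \<bar>t\<bar> * chord (b * (s - t))"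
    by (rule order_trans[OF norm_triangle_ineq]) (simp add: norm_mult chord_def)
  finally show ?thesis .
qed

lemma abs_norm_diff_diff_le:
  fixes a b c d :: "'a::real_normed_vector"
  shows "\<bar>norm (a - b) - norm (c - d)\<bar> \<le> norm (a - c) + norm (b - d)"
proof -
  have "\<bar>norm (a - b) - norm (c - d)\<bar> \<le> norm ((a - c) - (b - d))"
    using norm_triangle_ineq3[of "a - b" "c - d"] by (simp add: algebra_simps)
  also have "\<dots> \<le> norm (a - c) + norm (b - d)"
    by (rule norm_triangle_ineq4)
  finally show ?thesis .
qed

definition phase_dist :: "real \<Rightarrow> ('a \<Rightarrow> real) \<Rightarrow> ('a \<Rightarrow> real) \<Rightarrow> 'a \<Rightarrow> real" where
  "phase_dist b p q x = cmod (phase_lift b (p x) - phase_lift b (q x))"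

lemma borel_measurable_phase_dist [measurable]:
  assumes "p \<in> borel_measurable M" "q \<in> borel_measurable M"
  shows "phase_dist b p q \<in> borel_measurable M"
proof -
  have [measurable]: "(\<lambda>x. phase_lift b (p x)) \<in> borel_measurable M"
    "(\<lambda>x. phase_lift b (q x)) \<in> borel_measurable M"
    using assms by (auto intro: borel_measurable_phase_lift)
  show ?thesis unfolding phase_dist_def[abs_def] by measurable
qed

lemma phase_dist_commute: "phase_dist b p q = phase_dist b q p"
  by (simp add: phase_dist_def[abs_def] norm_minus_commute)

lemma phase_dist_triangle: "phase_dist b p q x \<le> phase_dist b p f x + phase_dist b f q x"
  unfolding phase_dist_def
  using norm_triangle_ineq[of "phase_lift b (p x) - phase_lift b (f x)" "phase_lift b (f x) - phase_lift b (q x)"]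
  by simp

lemma phase_dist_le: "phase_dist b p q x \<le> \<bar>p x\<bar> + \<bar>q x\<bar>"
  unfolding phase_dist_def using norm_triangle_ineq4 by (metis norm_phase_lift)

lemma phase_dist_eq_0_iff:
  assumes "0 \<le> p x" "0 \<le> q x"
  shows "phase_dist b p q x = 0 \<longleftrightarrow> p x = q x"
proof
  assume "phase_dist b p q x = 0"
  then have "cmod (phase_lift b (p x)) = cmod (phase_lift b (q x))"
    by (simp add: phase_dist_def)
  with assms show "p x = q x" by simp
qed (simp add: phase_dist_def)

lemma phase_dist_0: "phase_dist 0 p q = (\<lambda>x. \<bar>p x - q x\<bar>)"
  by (simp add: fun_eq_iff phase_dist_def phase_lift_def flip: of_real_diff)

lemma integrable_phase_dist:
  assumes "integrable M p" "integrable M q"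
  shows "integrable M (phase_dist b p q)"
proof (rule Bochner_Integration.integrable_bound[where f="\<lambda>x. \<bar>p x\<bar> + \<bar>q x\<bar>"])
  show "AE x in M. norm (phase_dist b p q x) \<le> norm (\<bar>p x\<bar> + \<bar>q x\<bar>)"
    using phase_dist_le[of b p q] by (simp add: phase_dist_def)
qed (use assms in auto)

lemma integral_phase_dist_nonneg: "0 \<le> (\<integral>x. phase_dist b p q x \<partial>M)"
  by (simp add: Bochner_Integration.integral_nonneg phase_dist_def)

lemma integral_phase_dist_eq_0_iff:
  assumes "integrable M p" "\<And>x. 0 \<le> p x" "integrable M q" "\<And>x. 0 \<le> q x"
  shows "(\<integral>x. phase_dist b p q x \<partial>M) = 0 \<longleftrightarrow> (AE x in M. p x = q x)"
proof -
  have "(\<integral>x. phase_dist b p q x \<partial>M) = 0 \<longleftrightarrow> (AE x in M. phase_dist b p q x = 0)"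
    by (rule integral_nonneg_eq_0_iff_AE[OF integrable_phase_dist[OF assms(1,3)]])
       (simp add: phase_dist_def)
  also have "\<dots> \<longleftrightarrow> (AE x in M. p x = q x)"
    using phase_dist_eq_0_iff[of p x q b for x] assms(2,4) by (intro AE_cong) simp
  finally show ?thesis .
qed

lemma integral_phase_dist_triangle:
  assumes "integrable M p" "integrable M q" "integrable M f"
  shows "(\<integral>x. phase_dist b p q x \<partial>M) \<le> (\<integral>x. phase_dist b p f x \<partial>M) + (\<integral>x. phase_dist b f q x \<partial>M)"
  using assms phase_dist_triangle
  by (subst Bochner_Integration.integral_add[symmetric])
     (auto intro!: Bochner_Integration.integral_mono integrable_phase_dist)

lemma integral_phase_dist_le:
  assumes "integrable M p" "\<And>x. 0 \<le> p x" "integrable M q" "\<And>x. 0 \<le> q x"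
  shows "(\<integral>x. phase_dist b p q x \<partial>M) \<le> (\<integral>x. p x \<partial>M) + (\<integral>x. q x \<partial>M)"
proof -
  have "(\<integral>x. phase_dist b p q x \<partial>M) \<le> (\<integral>x. p x + q x \<partial>M)"
    using phase_dist_le[of b p q x for x] assms
    by (intro Bochner_Integration.integral_mono integrable_phase_dist Bochner_Integration.integrable_add)
       simp_all
  then show ?thesis using assms by simp
qed

lemma isCont_integral_phase_dist:
  assumes p: "integrable M p" "\<And>x. 0 \<le> p x" and q: "integrable M q" "\<And>x. 0 \<le> q x"
  shows "isCont (\<lambda>b. \<integral>x. phase_dist b p q x \<partial>M) c"
  unfolding isCont_def
proof (rule tendsto_integral_by_error_bound)
  have [measurable]: "p \<in> borel_measurable M" "q \<in> borel_measurable M"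
    using p q by auto
  define B where "B b x = p x * chord ((b - c) * p x) + q x * chord ((b - c) * q x)" for b x
  show "integrable M (phase_dist b p q)" "integrable M (phase_dist c p q)" for b
    using p q by (auto intro: integrable_phase_dist)
  have int_p: "integrable M (\<lambda>x. p x * chord ((b - c) * p x))"
    and int_q: "integrable M (\<lambda>x. q x * chord ((b - c) * q x))" for b
    by (intro integrable_mult_bounded[where C=2] p q; simp add: chord_nonneg chord_le_2)+
  show "integrable M (B b)" for b
    unfolding B_def using int_p int_q by simp
  show "\<bar>phase_dist b p q x - phase_dist c p q x\<bar> \<le> B b x" for b x
    using abs_norm_diff_diff_le[of "phase_lift b (p x)" "phase_lift b (q x)" "phase_lift c (p x)" "phase_lift c (q x)"]
    by (simp add: B_def phase_dist_def norm_phase_lift_diff_param p(2) q(2))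
  have weight: "((\<lambda>b. \<integral>x. \<bar>(b - c) * r x\<bar> \<partial>M) \<longlongrightarrow> 0) (at c)" for r
  proof -
    have "((\<lambda>b. \<bar>b - c\<bar> * (\<integral>x. \<bar>r x\<bar> \<partial>M)) \<longlongrightarrow> 0) (at c)"
      by (intro tendsto_mult_left_zero tendsto_rabs_zero LIM_zero tendsto_ident_at)
    then show ?thesis by (simp add: abs_mult)
  qed
  show "((\<lambda>b. \<integral>x. B b x \<partial>M) \<longlongrightarrow> 0) (at c)"
    unfolding B_def using p q int_p int_q
    by (subst Bochner_Integration.integral_add)
       (auto intro!: tendsto_add_zero tendsto_integral_mult_chord_0 weight)
qed

lemma tendsto_integral_phase_dist_at_right_0:
  assumes "integrable M p" "\<And>x. 0 \<le> p x" "integrable M q" "\<And>x. 0 \<le> q x"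
  shows "((\<lambda>b. \<integral>x. phase_dist b p q x \<partial>M) \<longlongrightarrow> (\<integral>x. \<bar>p x - q x\<bar> \<partial>M)) (at_right 0)"
  using tendsto_mono[OF at_le[OF subset_UNIV] isCont_integral_phase_dist[OF assms, of 0, unfolded isCont_def]]
  by (simp add: phase_dist_0)

lemma tendsto_integral_phase_dist_L1:
  assumes p: "integrable M p" "\<And>x. 0 \<le> p x" and q: "integrable M q" "\<And>x. 0 \<le> q x"
    and p': "\<And>t. integrable M (p' t)" "((\<lambda>t. \<integral>x. \<bar>p' t x - p x\<bar> \<partial>M) \<longlongrightarrow> 0) F"
    and q': "\<And>t. integrable M (q' t)" "((\<lambda>t. \<integral>x. \<bar>q' t x - q x\<bar> \<partial>M) \<longlongrightarrow> 0) F"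
  shows "((\<lambda>t. \<integral>x. phase_dist b (p' t) (q' t) x \<partial>M) \<longlongrightarrow> (\<integral>x. phase_dist b p q x \<partial>M)) F"
proof (rule tendsto_integral_by_error_bound)
  have [measurable]: "p \<in> borel_measurable M" "q \<in> borel_measurable M"
    "p' t \<in> borel_measurable M" "q' t \<in> borel_measurable M" for t
    using p q p' q' by auto
  define B where "B t x = (\<bar>p' t x - p x\<bar> + p x * chord (b * (p' t x - p x)))
    + (\<bar>q' t x - q x\<bar> + q x * chord (b * (q' t x - q x)))" for t x
  show "integrable M (phase_dist b (p' t) (q' t))" "integrable M (phase_dist b p q)" for t
    using p q p' q' by (auto intro: integrable_phase_dist)
  have int_p: "integrable M (\<lambda>x. p x * chord (b * (p' t x - p x)))"
    and int_q: "integrable M (\<lambda>x. q x * chord (b * (q' t x - q x)))" for t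
    by (intro integrable_mult_bounded[where C=2] p q; simp add: chord_nonneg chord_le_2)+
  show "integrable M (B t)" for t
    unfolding B_def using p q p' q' int_p int_q by auto
  show "\<bar>phase_dist b (p' t) (q' t) x - phase_dist b p q x\<bar> \<le> B t x" for t x
    using abs_norm_diff_diff_le[of "phase_lift b (p' t x)" "phase_lift b (q' t x)" "phase_lift b (p x)" "phase_lift b (q x)"]
      norm_phase_lift_diff_le[of b "p' t x" "p x"] norm_phase_lift_diff_le[of b "q' t x" "q x"]
    by (simp add: B_def phase_dist_def p(2) q(2))
  have weight: "((\<lambda>t. \<integral>x. \<bar>b * (r' t x - r x)\<bar> \<partial>M) \<longlongrightarrow> 0) F"
    if "((\<lambda>t. \<integral>x. \<bar>r' t x - r x\<bar> \<partial>M) \<longlongrightarrow> 0) F" for r :: "'a \<Rightarrow> real" and r' :: "'b \<Rightarrow> 'a \<Rightarrow> real"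
    using tendsto_mult_right_zero[OF that, of "\<bar>b\<bar>"] by (simp add: abs_mult)
  show "((\<lambda>t. \<integral>x. B t x \<partial>M) \<longlongrightarrow> 0) F"
    unfolding B_def using p q p' q' int_p int_q
    by (subst Bochner_Integration.integral_add Bochner_Integration.integral_add, auto)+
       (auto intro!: tendsto_add_zero tendsto_integral_mult_chord_0 weight)
qed

lemma CM_eq_integral: "CM b p q = 1/2 * (\<integral>x. phase_dist b p q x \<partial>lborel)"
  by (simp add: CM_def phase_dist_def phase_lift_def)

lemma infsum_eq_integral_count_space:
  fixes f :: "'a \<Rightarrow> real"
  assumes "integrable (count_space UNIV) f"
  shows "(\<Sum>\<^sub>\<infinity>x. f x) = (\<integral>x. f x \<partial>count_space UNIV)"
  using infsetsum_infsum[of f UNIV] assms by (simp add: abs_summable_on_def infsetsum_def)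

lemma CMd_eq_integral:
  "CMd b P Q = 1/2 * (\<integral>x. phase_dist b (pmf P) (pmf Q) x \<partial>count_space UNIV)"
  using infsum_eq_integral_count_space[OF integrable_phase_dist[OF integrable_pmf integrable_pmf]]
  by (simp add: CMd_def phase_dist_def phase_lift_def)

lemma infsum_abs_pmf_diff:
  "(\<Sum>\<^sub>\<infinity>x. \<bar>pmf P x - pmf Q x\<bar>) = (\<integral>x. \<bar>pmf P x - pmf Q x\<bar> \<partial>count_space UNIV)"
  by (intro infsum_eq_integral_count_space integrable_abs Bochner_Integration.integrable_diff integrable_pmf)

lemma CM_tendsto_at_right_0:
  assumes "is_density p" "is_density q"
  shows "((\<lambda>b. CM b p q) \<longlongrightarrow> 1/2 * (\<integral>x. \<bar>p x - q x\<bar> \<partial>lborel)) (at_right 0)"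
  unfolding CM_eq_integral using assms
  by (intro tendsto_mult_left tendsto_integral_phase_dist_at_right_0) (auto simp: is_density_def)

lemma CMd_tendsto_at_right_0:
  "((\<lambda>b. CMd b P Q) \<longlongrightarrow> 1/2 * (\<Sum>\<^sub>\<infinity>x. \<bar>pmf P x - pmf Q x\<bar>)) (at_right 0)"
  unfolding CMd_eq_integral infsum_abs_pmf_diff
  by (intro tendsto_mult_left tendsto_integral_phase_dist_at_right_0 integrable_pmf pmf_nonneg)

lemma CM_tendsto_L1:
  assumes "is_density p" "is_density q" "\<And>n. is_density (pn n)" "\<And>n. is_density (qn n)"
    and "(\<lambda>n. \<integral>x. \<bar>pn n x - p x\<bar> \<partial>lborel) \<longlonglongrightarrow> 0"
    and "(\<lambda>n. \<integral>x. \<bar>qn n x - q x\<bar> \<partial>lborel) \<longlonglongrightarrow> 0"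
  shows "(\<lambda>n. CM b (pn n) (qn n)) \<longlonglongrightarrow> CM b p q"
  unfolding CM_eq_integral using assms
  by (intro tendsto_mult_left tendsto_integral_phase_dist_L1) (auto simp: is_density_def)

lemma CMd_tendsto_L1:
  assumes "(\<lambda>n. \<Sum>\<^sub>\<infinity>x. \<bar>pmf (Pn n) x - pmf P x\<bar>) \<longlonglongrightarrow> 0"
    and "(\<lambda>n. \<Sum>\<^sub>\<infinity>x. \<bar>pmf (Qn n) x - pmf Q x\<bar>) \<longlonglongrightarrow> 0"
  shows "(\<lambda>n. CMd b (Pn n) (Qn n)) \<longlonglongrightarrow> CMd b P Q"
  unfolding CMd_eq_integral using assms
  by (intro tendsto_mult_left tendsto_integral_phase_dist_L1 integrable_pmf pmf_nonneg)
     (auto simp: infsum_abs_pmf_diff)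

theorem mainTheorem10:
  fixes \<beta> :: real and p q f :: "real \<Rightarrow> real" and P Q F :: "'a pmf"
  assumes beta: "\<beta> > 0"
    and dens: "is_density p" "is_density q" "is_density f"
  shows
   "(CM \<beta> p q \<ge> 0 \<and> (CM \<beta> p q = 0 \<longleftrightarrow> (AE x in lborel. p x = q x))
     \<and> CM \<beta> p q = CM \<beta> q p
     \<and> CM \<beta> p q \<le> CM \<beta> p f + CM \<beta> f q
     \<and> (0 \<le> CM \<beta> p q \<and> CM \<beta> p q \<le> 1)
     \<and> ((\<lambda>b. CM b p q) \<longlongrightarrow> 1/2 * (\<integral>x. \<bar>p x - q x\<bar> \<partial>lborel)) (at_right 0)
     \<and> 1/2 * (\<integral>x. \<bar>p x - q x\<bar> \<partial>lborel) = TV p q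
     \<and> (\<forall>pn qn :: nat \<Rightarrow> real \<Rightarrow> real.
          (\<forall>n. is_density (pn n) \<and> is_density (qn n))
          \<and> ((\<lambda>n. \<integral>x. \<bar>pn n x - p x\<bar> \<partial>lborel) \<longlonglongrightarrow> 0)
          \<and> ((\<lambda>n. \<integral>x. \<bar>qn n x - q x\<bar> \<partial>lborel) \<longlonglongrightarrow> 0)
          \<longrightarrow> ((\<lambda>n. CM \<beta> (pn n) (qn n)) \<longlonglongrightarrow> CM \<beta> p q)))
    \<and>
    (CMd \<beta> P Q \<ge> 0 \<and> (CMd \<beta> P Q = 0 \<longleftrightarrow> (\<forall>x. pmf P x = pmf Q x))
     \<and> CMd \<beta> P Q = CMd \<beta> Q P
     \<and> CMd \<beta> P Q \<le> CMd \<beta> P F + CMd \<beta> F Q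
     \<and> (0 \<le> CMd \<beta> P Q \<and> CMd \<beta> P Q \<le> 1)
     \<and> ((\<lambda>b. CMd b P Q) \<longlongrightarrow> 1/2 * (\<Sum>\<^sub>\<infinity>x. \<bar>pmf P x - pmf Q x\<bar>)) (at_right 0)
     \<and> 1/2 * (\<Sum>\<^sub>\<infinity>x. \<bar>pmf P x - pmf Q x\<bar>) = TVd P Q
     \<and> (\<forall>Pn Qn :: nat \<Rightarrow> 'a pmf.
          ((\<lambda>n. \<Sum>\<^sub>\<infinity>x. \<bar>pmf (Pn n) x - pmf P x\<bar>) \<longlonglongrightarrow> 0)
          \<and> ((\<lambda>n. \<Sum>\<^sub>\<infinity>x. \<bar>pmf (Qn n) x - pmf Q x\<bar>) \<longlonglongrightarrow> 0)
          \<longrightarrow> ((\<lambda>n. CMd \<beta> (Pn n) (Qn n)) \<longlonglongrightarrow> CMd \<beta> P Q)))"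
proof -
  have p: "integrable lborel p" "\<And>x. 0 \<le> p x" "(\<integral>x. p x \<partial>lborel) = 1"
    and q: "integrable lborel q" "\<And>x. 0 \<le> q x" "(\<integral>x. q x \<partial>lborel) = 1"
    and f: "integrable lborel f"
    using dens by (auto simp: is_density_def)
  have pmf: "integrable (count_space UNIV) (pmf R)" "\<And>x. 0 \<le> pmf R x"
    "(\<integral>x. pmf R x \<partial>count_space UNIV) = 1" for R :: "'a pmf"
    by (simp_all add: integrable_pmf integral_pmf)
  show ?thesis
    using dens CM_tendsto_at_right_0 CMd_tendsto_at_right_0 CM_tendsto_L1 CMd_tendsto_L1
      integral_phase_dist_eq_0_iff[OF p(1,2) q(1,2)]
      integral_phase_dist_eq_0_iff[OF pmf(1,2)[of P] pmf(1,2)[of Q]]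
      integral_phase_dist_le[OF p(1,2) q(1,2)]
      integral_phase_dist_le[OF pmf(1,2)[of P] pmf(1,2)[of Q]]
      integral_phase_dist_triangle[OF p(1) q(1) f]
      integral_phase_dist_triangle[OF pmf(1)[of P] pmf(1)[of Q] pmf(1)[of F]]
    by (auto simp: CM_eq_integral CMd_eq_integral TV_def TVd_def AE_count_space p(3) q(3) pmf(3)
        phase_dist_commute integral_phase_dist_nonneg)
qed

end
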